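(* Let $\theta\in C^\infty(\mathbb{R})$ be defined by $\theta(x)=0$ for $x\le 0$ and $\theta(x)=e^{-1/x}$ for $x>0$. Let $D\subseteq \mathbb{C}^n$ be open, let $v$ be a pluriharmonic function on $D$, and let $d$ be a strictly plurisubharmonic function of class $C^2$ on $D$. Then for every open set $E$ with compact closure $\overline{E}\subset D$ there exists $\epsilon_0>0$ such that the function $e^{v}\theta(d)$ is plurisubharmonic on $E\cap \{d< \epsilon_0\}$. *)

theory Defs
  imports "HOL-Analysis.Analysis"
begin

definition theta :: "real \<Rightarrow> real" where
  "theta x = (if x \<le> 0 then 0 else exp (- 1 / x))"

definition usc_on :: "'a::topological_space set \<Rightarrow> ('a \<Rightarrow> real) \<Rightarrow> bool" where
  "usc_on S u \<longleftrightarrow> (\<forall>x\<in>S. \<forall>c. u x < c \<longrightarrow> (\<forall>\<^sub>F y in at x within S. u y < c))"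

text \<open>Plurisubharmonic (real-valued) function on a set of C^n: upper semicontinuous
  and satisfying the sub-mean value inequality on every closed complex disc
  {a + zeta b : |zeta| <= 1} contained in the set.  (For a real-valued function the
  mean value is finite exactly when the circle average is integrable.)\<close>
definition psh :: "(complex ^ 'n) set \<Rightarrow> (complex ^ 'n \<Rightarrow> real) \<Rightarrow> bool" where
  "psh D u \<longleftrightarrow> usc_on D u \<and>
     (\<forall>a b. (\<forall>\<zeta>::complex. norm \<zeta> \<le> 1 \<longrightarrow> a + \<zeta> *s b \<in> D) \<longrightarrow>
        (\<lambda>t. u (a + cis t *s b)) integrable_on {0..2*pi} \<and>
        u a \<le> integral {0..2*pi} (\<lambda>t. u (a + cis t *s b)) / (2*pi))"

definition C2_with :: "(complex ^ 'n) set \<Rightarrow> (complex ^ 'n \<Rightarrow> real)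
    \<Rightarrow> (complex ^ 'n \<Rightarrow> ((complex ^ 'n) \<Rightarrow>\<^sub>L real))
    \<Rightarrow> (complex ^ 'n \<Rightarrow> ((complex ^ 'n) \<Rightarrow>\<^sub>L ((complex ^ 'n) \<Rightarrow>\<^sub>L real))) \<Rightarrow> bool" where
  "C2_with D f f' f'' \<longleftrightarrow>
     (\<forall>x\<in>D. (f has_derivative blinfun_apply (f' x)) (at x)) \<and>
     (\<forall>x\<in>D. (f' has_derivative blinfun_apply (f'' x)) (at x)) \<and>
     continuous_on D f''"

text \<open>Levi form of f at x in direction b, computed from the real Hessian f'' x:
  L(x;b) = sum_{j,k} f_{z_j zbar_k} b_j conj(b_k) = (D^2 f(b,b) + D^2 f(ib,ib)) / 4.\<close>
definition levi :: "((complex ^ 'n) \<Rightarrow>\<^sub>L ((complex ^ 'n) \<Rightarrow>\<^sub>L real)) \<Rightarrow> complex ^ 'n \<Rightarrow> real" where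
  "levi H b = (blinfun_apply (blinfun_apply H b) b
               + blinfun_apply (blinfun_apply H (\<i> *s b)) (\<i> *s b)) / 4"

definition pluriharmonic :: "(complex ^ 'n) set \<Rightarrow> (complex ^ 'n \<Rightarrow> real) \<Rightarrow> bool" where
  "pluriharmonic D v \<longleftrightarrow>
     (\<exists>f' f''. C2_with D v f' f'' \<and> (\<forall>x\<in>D. \<forall>b. levi (f'' x) b = 0))"

definition strictly_psh_C2 :: "(complex ^ 'n) set \<Rightarrow> (complex ^ 'n \<Rightarrow> real) \<Rightarrow> bool" where
  "strictly_psh_C2 D d \<longleftrightarrow>
     (\<exists>f' f''. C2_with D d f' f'' \<and> (\<forall>x\<in>D. \<forall>b. b \<noteq> 0 \<longrightarrow> levi (f'' x) b > 0))"

end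

(*
  With A = (Dv b, Dv (i b)) and B = (Dd b, Dd (i b)), the Levi form of u = e^v theta(d) is
    4 L_u(b) = e^v (theta''(d) |B|^2 + theta'(d) (4 L_d(b) + 2 A.B) + theta(d) |A|^2),
  since L_v = 0. For s = d > 0 one has theta = e^(-1/s), theta' = theta / s^2 and
  theta'' = theta (1/s^4 - 2/s^3), so s^4 e^(1/s) times the bracket is
    (1 - 2s) |B|^2 + s^2 (4 L_d(b) + 2 A.B) + s^4 |A|^2,
  and completing the square in B shows it is nonnegative once s <= 1/4 and
  s^2 |A|^2 <= 4 L_d(b). On the compact set closure E, |Dv| is bounded and L_d(b) >= mu |b|^2
  with mu > 0, so the last condition holds for all small s.

  A C^2 function with nonnegative Levi form is plurisubharmonic: on the disc a + zeta b its
  Laplacian in zeta is 4 L_u(b) >= 0, and the circle mean M(r) is nondecreasing in r. Indeed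
  r M'(r) vanishes at r = 0 and its derivative is r times the integral of the Laplacian over the
  circle of radius r; the latter identity comes from differentiating under the integral sign and
  integrating the angular derivative of Du(b_r)(b_t) over a period (b_r, b_t the radial and
  tangential directions).
*)

theory Submission
  imports Defs "HOL-Real_Asymp.Real_Asymp"
begin

lemma has_real_derivative_zero_extension:
  fixes g g' :: "real \<Rightarrow> real"
  assumes deriv: "\<And>s. s > 0 \<Longrightarrow> (g has_real_derivative g' s) (at s)"
    and flat: "((\<lambda>s. g s / s) \<longlongrightarrow> 0) (at_right 0)"
  shows "((\<lambda>s. if s \<le> 0 then 0 else g s) has_real_derivative (if s \<le> 0 then 0 else g' s)) (at s)"
proof -
  consider "s < 0" | "s = 0" | "s > 0" by linarith
  then show ?thesis
  proof cases
    case 1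
    have "((\<lambda>s. if s \<le> 0 then 0 else g s) has_real_derivative 0) (at s)"
      by (rule has_field_derivative_transform_within_open[OF DERIV_const, where S="{..<0}"])
        (use 1 in auto)
    then show ?thesis
      using 1 by simp
  next
    case 2
    have "((\<lambda>y. (if y \<le> 0 then 0 else g y) / y) \<longlongrightarrow> 0) (at 0)"
    proof (rule filterlim_split_at)
      show "((\<lambda>y. (if y \<le> 0 then 0 else g y) / y) \<longlongrightarrow> 0) (at_left 0)"
        by (rule Lim_transform_eventually[OF tendsto_const])
          (auto simp: eventually_at_left_field intro: exI[of _ "-1::real"])
      show "((\<lambda>y. (if y \<le> 0 then 0 else g y) / y) \<longlongrightarrow> 0) (at_right 0)"
        by (rule Lim_transform_eventually[OF flat])
          (auto simp: eventually_at_right_field intro: exI[of _ "1::real"])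
    qed
    then show ?thesis
      using 2 by (simp add: has_field_derivative_iff)
  next
    case 3
    have "((\<lambda>s. if s \<le> 0 then 0 else g s) has_real_derivative g' s) (at s)"
      by (rule has_field_derivative_transform_within_open[OF deriv[OF 3], where S="{0<..}"])
        (use 3 in auto)
    then show ?thesis
      using 3 by simp
  qed
qed

lemma isCont_zero_extension:
  fixes g :: "real \<Rightarrow> real"
  assumes cont: "\<And>s. s > 0 \<Longrightarrow> isCont g s"
    and lim: "(g \<longlongrightarrow> 0) (at_right 0)"
  shows "isCont (\<lambda>s. if s \<le> 0 then 0 else g s) s"
proof -
  consider "s < 0" | "s = 0" | "s > 0" by linarith
  then show ?thesis
  proof cases
    case 1
    have "\<forall>\<^sub>F y in nhds s. 0 = (if y \<le> 0 then 0 else g y)"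
      using eventually_nhds_in_open[of "{..<0}" s] 1 by (auto elim!: eventually_mono)
    then have "\<forall>\<^sub>F y in at s. 0 = (if y \<le> 0 then 0 else g y)"
      unfolding eventually_at_filter by (rule eventually_mono) auto
    then show ?thesis
      using 1 by (simp add: isCont_def Lim_transform_eventually[OF tendsto_const])
  next
    case 2
    have "((\<lambda>y. if y \<le> 0 then 0 else g y) \<longlongrightarrow> 0) (at 0)"
    proof (rule filterlim_split_at)
      show "((\<lambda>y. if y \<le> 0 then 0 else g y) \<longlongrightarrow> 0) (at_left 0)"
        by (rule Lim_transform_eventually[OF tendsto_const])
          (auto simp: eventually_at_left_field intro: exI[of _ "-1::real"])
      show "((\<lambda>y. if y \<le> 0 then 0 else g y) \<longlongrightarrow> 0) (at_right 0)"
        by (rule Lim_transform_eventually[OF lim])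
          (auto simp: eventually_at_right_field intro: exI[of _ "1::real"])
    qed
    then show ?thesis
      using 2 by (simp add: isCont_def)
  next
    case 3
    have "\<forall>\<^sub>F y in nhds s. g y = (if y \<le> 0 then 0 else g y)"
      using eventually_nhds_in_open[of "{0<..}" s] 3 by (auto elim!: eventually_mono)
    then have "\<forall>\<^sub>F y in at s. g y = (if y \<le> 0 then 0 else g y)"
      unfolding eventually_at_filter by (rule eventually_mono) auto
    then show ?thesis
      using 3 cont[OF 3] by (simp add: isCont_def Lim_transform_eventually)
  qed
qed

definition theta' :: "real \<Rightarrow> real" where
  "theta' s = (if s \<le> 0 then 0 else exp (- 1 / s) / s\<^sup>2)"

definition theta'' :: "real \<Rightarrow> real" where
  "theta'' s = (if s \<le> 0 then 0 else exp (- 1 / s) * (1 / s ^ 4 - 2 / s ^ 3))"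

lemma theta_has_real_derivative: "(theta has_real_derivative theta' s) (at s)"
  unfolding theta_def theta'_def
  by (rule has_real_derivative_zero_extension)
    (auto intro!: derivative_eq_intros simp: field_simps power2_eq_square, real_asymp)

lemma theta'_has_real_derivative: "(theta' has_real_derivative theta'' s) (at s)"
  unfolding theta'_def theta''_def
  by (rule has_real_derivative_zero_extension)
    (auto intro!: derivative_eq_intros simp: field_simps eval_nat_numeral, real_asymp)

lemma isCont_theta'': "isCont theta'' s"
  unfolding theta''_def
  by (rule isCont_zero_extension) ((intro continuous_intros; simp), real_asymp)

lemma integrable_on_slice:
  fixes f :: "real \<Rightarrow> real \<Rightarrow> real"
  assumes "continuous_on (R \<times> UNIV) (\<lambda>(r, t). f r t)" "r \<in> R"
  shows "f r integrable_on {a..b}"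
proof -
  have "continuous_on {a..b} (\<lambda>t. (r, t))" "(\<lambda>t. (r, t)) ` {a..b} \<subseteq> R \<times> UNIV"
    using assms(2) by (auto intro!: continuous_intros)
  then have "continuous_on {a..b} (f r)"
    using continuous_on_compose2[OF assms(1)] by fastforce
  then show ?thesis
    by (rule integrable_continuous_interval)
qed

lemma periodic_derivative_has_integral_0:
  fixes g :: "real \<Rightarrow> real"
  assumes "a \<le> b" "\<And>t. t \<in> {a..b} \<Longrightarrow> (g has_real_derivative g' t) (at t)" "g a = g b"
  shows "(g' has_integral 0) {a..b}"
  using fundamental_theorem_of_calculus[of a b g g'] assms
  by (simp add: has_real_derivative_iff_has_vector_derivative has_vector_derivative_at_within)

locale C2_near_disc =
  fixes S :: "'a::real_normed_vector set" and u :: "'a \<Rightarrow> real"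
    and u' :: "'a \<Rightarrow> 'a \<Rightarrow>\<^sub>L real" and u'' :: "'a \<Rightarrow> 'a \<Rightarrow>\<^sub>L 'a \<Rightarrow>\<^sub>L real"
    and a e1 e2 :: 'a
  assumes disc_subset: "\<And>r t. r \<in> {0..1} \<Longrightarrow> a + r *\<^sub>R (cos t *\<^sub>R e1 + sin t *\<^sub>R e2) \<in> S"
    and has_derivative_u: "\<And>x. x \<in> S \<Longrightarrow> (u has_derivative u' x) (at x)"
    and has_derivative_u': "\<And>x. x \<in> S \<Longrightarrow> (u' has_derivative u'' x) (at x)"
    and continuous_on_u'': "continuous_on S u''"
begin

definition rad :: "real \<Rightarrow> 'a" where
  "rad t = cos t *\<^sub>R e1 + sin t *\<^sub>R e2"

definition tang :: "real \<Rightarrow> 'a" where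
  "tang t = cos t *\<^sub>R e2 - sin t *\<^sub>R e1"

definition polar :: "real \<Rightarrow> real \<Rightarrow> 'a" where
  "polar r t = a + r *\<^sub>R rad t"

definition circle_mean :: "real \<Rightarrow> real" where
  "circle_mean r = integral {0..2*pi} (\<lambda>t. u (polar r t))"

definition radial_flux :: "real \<Rightarrow> real" where
  "radial_flux r = integral {0..2*pi} (\<lambda>t. u' (polar r t) (rad t))"

definition radial_hessian :: "real \<Rightarrow> real" where
  "radial_hessian r = integral {0..2*pi} (\<lambda>t. u'' (polar r t) (rad t) (rad t))"

definition tangential_hessian :: "real \<Rightarrow> real" where
  "tangential_hessian r = integral {0..2*pi} (\<lambda>t. u'' (polar r t) (tang t) (tang t))"

lemma polar_in_S: "r \<in> {0..1} \<Longrightarrow> polar r t \<in> S"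
  using disc_subset by (simp add: polar_def rad_def)

lemma rad_has_derivative: "(rad has_derivative (\<lambda>h. h *\<^sub>R tang t)) (at t)"
  unfolding rad_def tang_def
  by (auto intro!: derivative_eq_intros simp: algebra_simps)

lemma tang_has_derivative: "(tang has_derivative (\<lambda>h. - h *\<^sub>R rad t)) (at t)"
  unfolding rad_def tang_def
  by (auto intro!: derivative_eq_intros simp: algebra_simps)

lemma continuous_on_integrands:
  defines "R \<equiv> {0..1} \<times> (UNIV :: real set)"
  shows "continuous_on R (\<lambda>(r, t). u (polar r t))"
    and "continuous_on R (\<lambda>(r, t). u' (polar r t) (rad t))"
    and "continuous_on R (\<lambda>(r, t). u'' (polar r t) (rad t) (rad t))"
    and "continuous_on R (\<lambda>(r, t). u'' (polar r t) (tang t) (tang t))"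
proof -
  have polar: "continuous_on R (\<lambda>(r, t). polar r t)"
    by (simp add: polar_def rad_def split_beta continuous_intros)
  have polar_S: "(\<lambda>(r, t). polar r t) ` R \<subseteq> S"
    using polar_in_S by (auto simp: R_def)
  have "continuous_on S u" "continuous_on S u'"
    using has_derivative_u has_derivative_u'
    by (meson has_derivative_continuous continuous_at_imp_continuous_on)+
  then have u: "continuous_on R (\<lambda>(r, t). u (polar r t))"
    and u': "continuous_on R (\<lambda>(r, t). u' (polar r t))"
    and u'': "continuous_on R (\<lambda>(r, t). u'' (polar r t))"
    using continuous_on_compose2[OF _ polar polar_S] continuous_on_u'' by (simp_all add: split_beta)
  have rad: "continuous_on R (\<lambda>(r::real, t). rad t)" and tang: "continuous_on R (\<lambda>(r::real, t). tang t)"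
    by (simp_all add: rad_def tang_def split_beta continuous_intros)
  show "continuous_on R (\<lambda>(r, t). u (polar r t))"
    by (fact u)
  show "continuous_on R (\<lambda>(r, t). u' (polar r t) (rad t))"
    using blinfun.continuous_on[OF u' rad] by (simp add: split_beta)
  show "continuous_on R (\<lambda>(r, t). u'' (polar r t) (rad t) (rad t))"
    using blinfun.continuous_on[OF blinfun.continuous_on[OF u'' rad] rad] by (simp add: split_beta)
  show "continuous_on R (\<lambda>(r, t). u'' (polar r t) (tang t) (tang t))"
    using blinfun.continuous_on[OF blinfun.continuous_on[OF u'' tang] tang] by (simp add: split_beta)
qed

lemma integrable_on_integrands:
  assumes "r \<in> {0..1}"
  shows "(\<lambda>t. u (polar r t)) integrable_on {0..2*pi}"
    and "(\<lambda>t. u' (polar r t) (rad t)) integrable_on {0..2*pi}"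
    and "(\<lambda>t. u'' (polar r t) (rad t) (rad t)) integrable_on {0..2*pi}"
    and "(\<lambda>t. u'' (polar r t) (tang t) (tang t)) integrable_on {0..2*pi}"
  using integrable_on_slice[OF continuous_on_integrands(1) assms]
    integrable_on_slice[OF continuous_on_integrands(2) assms]
    integrable_on_slice[OF continuous_on_integrands(3) assms]
    integrable_on_slice[OF continuous_on_integrands(4) assms]
  by simp_all

lemma u_polar_has_derivative_radius:
  assumes "r \<in> {0..1}"
  shows "((\<lambda>r. u (polar r t)) has_field_derivative u' (polar r t) (rad t)) (at r)"
proof -
  have "((\<lambda>r. polar r t) has_derivative (\<lambda>h. h *\<^sub>R rad t)) (at r)"
    unfolding polar_def by (auto intro!: derivative_eq_intros)
  from has_derivative_compose[OF this has_derivative_u[OF polar_in_S[OF assms]]]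
  show ?thesis
    unfolding has_field_derivative_def
    by (rule has_derivative_eq_rhs) (simp add: fun_eq_iff blinfun.scaleR_right)
qed

lemma u'_polar_has_derivative_radius:
  assumes "r \<in> {0..1}"
  shows "((\<lambda>r. u' (polar r t) (rad t)) has_field_derivative u'' (polar r t) (rad t) (rad t)) (at r)"
proof -
  have "((\<lambda>r. polar r t) has_derivative (\<lambda>h. h *\<^sub>R rad t)) (at r)"
    unfolding polar_def by (auto intro!: derivative_eq_intros)
  from has_derivative_compose[OF this has_derivative_u'[OF polar_in_S[OF assms]]]
  have "((\<lambda>r. u' (polar r t)) has_derivative (\<lambda>h. u'' (polar r t) (h *\<^sub>R rad t))) (at r)" .
  from blinfun.FDERIV[OF this has_derivative_const]
  show ?thesis
    unfolding has_field_derivative_def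
    by (rule has_derivative_eq_rhs)
      (simp add: fun_eq_iff blinfun.scaleR_right blinfun.scaleR_left)
qed

lemma u'_polar_has_derivative_angle:
  assumes "r \<in> {0..1}"
  shows "((\<lambda>t. u' (polar r t) (tang t)) has_field_derivative
           r * u'' (polar r t) (tang t) (tang t) - u' (polar r t) (rad t)) (at t)"
proof -
  have "((\<lambda>t. polar r t) has_derivative (\<lambda>h. h *\<^sub>R (r *\<^sub>R tang t))) (at t)"
    unfolding polar_def
    using has_derivative_add[OF has_derivative_const has_derivative_scaleR_right[OF rad_has_derivative]]
    by (rule has_derivative_eq_rhs) (auto simp: fun_eq_iff)
  from has_derivative_compose[OF this has_derivative_u'[OF polar_in_S[OF assms]]]
  have "((\<lambda>t. u' (polar r t)) has_derivative (\<lambda>h. u'' (polar r t) (h *\<^sub>R (r *\<^sub>R tang t)))) (at t)" .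
  from blinfun.FDERIV[OF this tang_has_derivative]
  show ?thesis
    unfolding has_field_derivative_def
    by (rule has_derivative_eq_rhs)
      (simp add: fun_eq_iff blinfun.scaleR_right blinfun.scaleR_left blinfun.minus_right algebra_simps)
qed

lemma circle_mean_has_derivative:
  assumes "r \<in> {0..1}"
  shows "(circle_mean has_field_derivative radial_flux r) (at r within {0..1})"
  unfolding circle_mean_def radial_flux_def
  by (rule leibniz_rule_field_derivative[of "{0..1}" 0 "2*pi", unfolded cbox_interval])
    (use assms in \<open>auto intro: has_field_derivative_at_within[OF u_polar_has_derivative_radius]
      integrable_on_integrands(1) continuous_on_subset[OF continuous_on_integrands(2)]\<close>)

lemma radial_flux_has_derivative:
  assumes "r \<in> {0..1}"
  shows "(radial_flux has_field_derivative radial_hessian r) (at r within {0..1})"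
  unfolding radial_flux_def radial_hessian_def
  by (rule leibniz_rule_field_derivative[of "{0..1}" 0 "2*pi", unfolded cbox_interval])
    (use assms in \<open>auto intro: has_field_derivative_at_within[OF u'_polar_has_derivative_radius]
      integrable_on_integrands(2) continuous_on_subset[OF continuous_on_integrands(3)]\<close>)

lemma radial_flux_eq_tangential_hessian:
  assumes "r \<in> {0..1}"
  shows "radial_flux r = r * tangential_hessian r"
proof -
  have "((\<lambda>t. r * u'' (polar r t) (tang t) (tang t) - u' (polar r t) (rad t)) has_integral 0) {0..2*pi}"
    by (rule periodic_derivative_has_integral_0[OF _ u'_polar_has_derivative_angle[OF assms]])
      (simp_all add: polar_def rad_def tang_def)
  then have "integral {0..2*pi} (\<lambda>t. r * u'' (polar r t) (tang t) (tang t) - u' (polar r t) (rad t)) = 0"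
    by (rule integral_unique)
  then show ?thesis
    unfolding radial_flux_def tangential_hessian_def
    using integrable_on_cmult_left[OF integrable_on_integrands(4)[OF assms], of r]
      integrable_on_integrands(2)[OF assms]
    by (subst (asm) integral_diff) simp_all
qed

lemma hessian_trace_rotation:
  fixes H :: "'a \<Rightarrow>\<^sub>L 'a \<Rightarrow>\<^sub>L real"
  shows "H (rad t) (rad t) + H (tang t) (tang t) = H e1 e1 + H e2 e2"
proof -
  have "H (rad t) (rad t) + H (tang t) (tang t) = (cos t * cos t + sin t * sin t) * (H e1 e1 + H e2 e2)"
    by (simp add: rad_def tang_def blinfun.add_left blinfun.add_right blinfun.diff_left
        blinfun.diff_right blinfun.scaleR_left blinfun.scaleR_right algebra_simps
        del: sin_cos_squared_add3)
  then show ?thesis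
    by simp
qed

lemma hessian_means_nonneg:
  assumes laplacian: "\<And>x. x \<in> S \<Longrightarrow> 0 \<le> u'' x e1 e1 + u'' x e2 e2" and "r \<in> {0..1}"
  shows "0 \<le> radial_hessian r + tangential_hessian r"
proof -
  have "radial_hessian r + tangential_hessian r = integral {0..2*pi}
      (\<lambda>t. u'' (polar r t) (rad t) (rad t) + u'' (polar r t) (tang t) (tang t))"
    unfolding radial_hessian_def tangential_hessian_def
    using integrable_on_integrands(3,4)[OF assms(2)] by (subst integral_add) simp_all
  also have "\<dots> \<ge> 0"
  proof (rule integral_nonneg)
    show "(\<lambda>t. u'' (polar r t) (rad t) (rad t) + u'' (polar r t) (tang t) (tang t)) integrable_on {0..2*pi}"
      using integrable_on_integrands(3,4)[OF assms(2)] by (rule integrable_add)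
  qed (use laplacian[OF polar_in_S[OF assms(2)]] in \<open>simp add: hessian_trace_rotation\<close>)
  finally show ?thesis .
qed


lemma radial_flux_nonneg:
  assumes laplacian: "\<And>x. x \<in> S \<Longrightarrow> 0 \<le> u'' x e1 e1 + u'' x e2 e2" and "0 < r" "r \<le> 1"
  shows "0 \<le> radial_flux r"
proof -
  have "(\<lambda>r. r * radial_flux r) 0 \<le> (\<lambda>r. r * radial_flux r) r"
  proof (rule DERIV_nonneg_imp_increasing_open[of 0 r])
    fix x assume x: "0 < x" "x < r"
    then have x01: "x \<in> {0..1}"
      using assms by auto
    have "((\<lambda>r. r * radial_flux r) has_real_derivative radial_flux x + radial_hessian x * x)
        (at x within {0..1})"
      using DERIV_mult[OF DERIV_ident radial_flux_has_derivative[OF x01]] by simp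
    then have "((\<lambda>r. r * radial_flux r) has_real_derivative radial_flux x + radial_hessian x * x) (at x)"
      using at_within_Icc_at[of 0 x 1] x assms by simp
    moreover have "radial_flux x + radial_hessian x * x = x * (radial_hessian x + tangential_hessian x)"
      using radial_flux_eq_tangential_hessian[OF x01] by (simp add: algebra_simps)
    ultimately show "\<exists>y. ((\<lambda>r. r * radial_flux r) has_real_derivative y) (at x) \<and> 0 \<le> y"
      using hessian_means_nonneg[OF laplacian x01] x by auto
  next
    have "continuous_on {0..1} radial_flux"
      by (rule DERIV_continuous_on) (rule radial_flux_has_derivative)
    then have "continuous_on {0..r} radial_flux"
      by (rule continuous_on_subset) (use assms in auto)
    then show "continuous_on {0..r} (\<lambda>r. r * radial_flux r)"
      by (intro continuous_intros)
  qed (use assms in simp)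
  then show ?thesis
    using assms by (simp add: zero_le_mult_iff)
qed

lemma circle_mean_mono:
  assumes laplacian: "\<And>x. x \<in> S \<Longrightarrow> 0 \<le> u'' x e1 e1 + u'' x e2 e2"
  shows "circle_mean 0 \<le> circle_mean 1"
proof (rule DERIV_nonneg_imp_increasing_open[of 0 1])
  show "continuous_on {0..1} circle_mean"
    by (rule DERIV_continuous_on) (rule circle_mean_has_derivative)
next
  fix x :: real assume x: "0 < x" "x < 1"
  then have "(circle_mean has_real_derivative radial_flux x) (at x)"
    using circle_mean_has_derivative[of x] at_within_Icc_at[of 0 x 1] by simp
  then show "\<exists>y. (circle_mean has_real_derivative y) (at x) \<and> 0 \<le> y"
    using radial_flux_nonneg[OF laplacian] x by auto
qed simp

lemma sub_mean_value:
  assumes "\<And>x. x \<in> S \<Longrightarrow> 0 \<le> u'' x e1 e1 + u'' x e2 e2"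
  shows "(\<lambda>t. u (a + (cos t *\<^sub>R e1 + sin t *\<^sub>R e2))) integrable_on {0..2*pi}"
    and "u a \<le> integral {0..2*pi} (\<lambda>t. u (a + (cos t *\<^sub>R e1 + sin t *\<^sub>R e2))) / (2*pi)"
proof -
  show "(\<lambda>t. u (a + (cos t *\<^sub>R e1 + sin t *\<^sub>R e2))) integrable_on {0..2*pi}"
    using integrable_on_integrands(1)[of 1] by (simp add: polar_def rad_def)
  have "circle_mean 0 = 2 * pi * u a" "circle_mean 1 = integral {0..2*pi} (\<lambda>t. u (a + (cos t *\<^sub>R e1 + sin t *\<^sub>R e2)))"
    by (simp_all add: circle_mean_def polar_def rad_def)
  with circle_mean_mono[OF assms] show "u a \<le> integral {0..2*pi} (\<lambda>t. u (a + (cos t *\<^sub>R e1 + sin t *\<^sub>R e2))) / (2*pi)"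
    by (simp add: field_simps)
qed

end

definition blinfun_outer :: "('a::real_normed_vector \<Rightarrow>\<^sub>L real) \<Rightarrow> 'b::real_normed_vector \<Rightarrow> 'a \<Rightarrow>\<^sub>L 'b" where
  "blinfun_outer f w = blinfun_scaleR_left w o\<^sub>L f"

lemma blinfun_outer_apply [simp]: "blinfun_outer f w h = f h *\<^sub>R w"
  by (simp add: blinfun_outer_def)

lemma continuous_on_blinfun_outer [continuous_intros]:
  "continuous_on S f \<Longrightarrow> continuous_on S g \<Longrightarrow> continuous_on S (\<lambda>x. blinfun_outer (f x) (g x))"
  unfolding blinfun_outer_def by (intro continuous_intros)

lemma C2_with_continuous_on:
  assumes "C2_with D f f' f''"
  shows "continuous_on D f" and "continuous_on D f'"
  using assms unfolding C2_with_def
  by (meson has_derivative_continuous continuous_at_imp_continuous_on)+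

lemma C2_with_subset: "C2_with D f f' f'' \<Longrightarrow> S \<subseteq> D \<Longrightarrow> C2_with S f f' f''"
  unfolding C2_with_def by (auto intro: continuous_on_subset)

lemma C2_with_compose_real:
  fixes g g1 g2 :: "real \<Rightarrow> real"
  assumes f: "C2_with D f f' f''"
    and g: "\<And>y. (g has_real_derivative g1 y) (at y)"
    and g1: "\<And>y. (g1 has_real_derivative g2 y) (at y)"
    and g2: "\<And>y. isCont g2 y"
  shows "C2_with D (\<lambda>x. g (f x)) (\<lambda>x. g1 (f x) *\<^sub>R f' x)
           (\<lambda>x. blinfun_outer (g2 (f x) *\<^sub>R f' x) (f' x) + g1 (f x) *\<^sub>R f'' x)"
proof -
  have df: "\<And>x. x \<in> D \<Longrightarrow> (f has_derivative f' x) (at x)"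
    and df': "\<And>x. x \<in> D \<Longrightarrow> (f' has_derivative f'' x) (at x)"
    and cf'': "continuous_on D f''"
    using f unfolding C2_with_def by auto
  have chain: "((\<lambda>y. h (f y)) has_derivative (h' (f x) *\<^sub>R f' x)) (at x)"
    if "x \<in> D" "\<And>y. (h has_real_derivative h' y) (at y)" for h h' :: "real \<Rightarrow> real" and x
    using has_derivative_compose[OF df[OF that(1)] that(2)[unfolded has_field_derivative_def]]
    by (rule has_derivative_eq_rhs) (simp add: fun_eq_iff blinfun.scaleR_left)
  have "((\<lambda>x. g1 (f x) *\<^sub>R f' x) has_derivative
         (blinfun_outer (g2 (f x) *\<^sub>R f' x) (f' x) + g1 (f x) *\<^sub>R f'' x)) (at x)" if "x \<in> D" for x
    using has_derivative_scaleR[OF chain[OF that g1] df'[OF that]]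
    by (rule has_derivative_eq_rhs)
      (auto intro!: ext blinfun_eqI simp: blinfun.scaleR_left blinfun.add_left algebra_simps)
  moreover have "continuous_on D (\<lambda>x. blinfun_outer (g2 (f x) *\<^sub>R f' x) (f' x) + g1 (f x) *\<^sub>R f'' x)"
  proof -
    have "continuous_on UNIV g1" "continuous_on UNIV g2"
      using DERIV_isCont[OF g1] g2 by (simp_all add: continuous_at_imp_continuous_on)
    then have "continuous_on D (\<lambda>x. g1 (f x))" "continuous_on D (\<lambda>x. g2 (f x))"
      using continuous_on_compose2[OF _ C2_with_continuous_on(1)[OF f]] by auto
    then show ?thesis
      using C2_with_continuous_on(2)[OF f] cf'' by (intro continuous_intros)
  qed
  ultimately show ?thesis
    unfolding C2_with_def using chain[OF _ g] by blast
qed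

lemma C2_with_mult:
  assumes f: "C2_with D f f' f''" and g: "C2_with D g g' g''"
  shows "C2_with D (\<lambda>x. f x * g x) (\<lambda>x. f x *\<^sub>R g' x + g x *\<^sub>R f' x)
           (\<lambda>x. f x *\<^sub>R g'' x + blinfun_outer (f' x) (g' x) + g x *\<^sub>R f'' x + blinfun_outer (g' x) (f' x))"
proof -
  have df: "\<And>x. x \<in> D \<Longrightarrow> (f has_derivative f' x) (at x)"
    and df': "\<And>x. x \<in> D \<Longrightarrow> (f' has_derivative f'' x) (at x)"
    and dg: "\<And>x. x \<in> D \<Longrightarrow> (g has_derivative g' x) (at x)"
    and dg': "\<And>x. x \<in> D \<Longrightarrow> (g' has_derivative g'' x) (at x)"
    using f g unfolding C2_with_def by auto
  have "((\<lambda>x. f x * g x) has_derivative (f x *\<^sub>R g' x + g x *\<^sub>R f' x)) (at x)" if "x \<in> D" for x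
    using has_derivative_mult[OF df[OF that] dg[OF that]]
    by (rule has_derivative_eq_rhs) (auto simp: blinfun.scaleR_left blinfun.add_left algebra_simps)
  moreover have "((\<lambda>x. f x *\<^sub>R g' x + g x *\<^sub>R f' x) has_derivative
      (f x *\<^sub>R g'' x + blinfun_outer (f' x) (g' x) + g x *\<^sub>R f'' x + blinfun_outer (g' x) (f' x))) (at x)" if "x \<in> D" for x
    using has_derivative_add[OF has_derivative_scaleR[OF df[OF that] dg'[OF that]]
        has_derivative_scaleR[OF dg[OF that] df'[OF that]]]
    by (rule has_derivative_eq_rhs)
      (auto intro!: ext blinfun_eqI simp: blinfun.scaleR_left blinfun.add_left algebra_simps)
  moreover have "continuous_on D (\<lambda>x. f x *\<^sub>R g'' x + blinfun_outer (f' x) (g' x) + g x *\<^sub>R f'' x + blinfun_outer (g' x) (f' x))"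
    using C2_with_continuous_on[OF f] C2_with_continuous_on[OF g] f g
    unfolding C2_with_def by (intro continuous_intros) simp_all
  ultimately show ?thesis
    unfolding C2_with_def by blast
qed

lemma levi_add [simp]: "levi (H + K) b = levi H b + levi K b"
  by (simp add: levi_def blinfun.add_left field_simps)

lemma levi_scaleR_left [simp]: "levi (c *\<^sub>R H) b = c * levi H b"
  by (simp add: levi_def blinfun.scaleR_left algebra_simps)

lemma levi_blinfun_outer [simp]: "levi (blinfun_outer f w) b = (f b * w b + f (\<i> *s b) * w (\<i> *s b)) / 4"
  by (simp add: levi_def blinfun.scaleR_left)

lemma levi_scaleR_right: "levi H (r *\<^sub>R b) = r\<^sup>2 * levi H b"
proof -
  have "\<i> *s (r *\<^sub>R b) = r *\<^sub>R (\<i> *s b)"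
    by (vector scaleR_conv_of_real)
  then show ?thesis
    by (simp add: levi_def blinfun.scaleR_left blinfun.scaleR_right power2_eq_square algebra_simps)
qed

lemma continuous_on_imp_usc_on:
  assumes "continuous_on S f"
  shows "usc_on S f"
  unfolding usc_on_def
proof (intro ballI allI impI)
  fix x c
  assume "x \<in> S" "f x < c"
  have "(f \<longlongrightarrow> f x) (at x within S)"
    using assms \<open>x \<in> S\<close> by (simp add: continuous_on_def)
  then show "\<forall>\<^sub>F y in at x within S. f y < c"
    using \<open>f x < c\<close> by (rule order_tendstoD(2))
qed

lemma of_real_mult_smult: "(complex_of_real r * z) *s (b :: complex ^ 'n) = r *\<^sub>R (z *s b)"
  by (vector scaleR_conv_of_real)

lemma bounded_linear_vector_smult [bounded_linear]: "bounded_linear (\<lambda>b :: complex ^ 'n. c *s b)"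
  by (rule linear_conv_bounded_linear[THEN iffD1], rule linearI)
    (vector algebra_simps scaleR_conv_of_real)+

lemma cis_smult: "cis t *s (b :: complex ^ 'n) = cos t *\<^sub>R b + sin t *\<^sub>R (\<i> *s b)"
  by (vector complex_eq_iff algebra_simps)

lemma C2_levi_nonneg_imp_psh:
  assumes C2: "C2_with S u u' u''" and levi_nonneg: "\<And>x b. x \<in> S \<Longrightarrow> 0 \<le> levi (u'' x) b"
  shows "psh S u"
  unfolding psh_def
proof (intro conjI allI impI)
  show "usc_on S u"
    using C2_with_continuous_on(1)[OF C2] by (rule continuous_on_imp_usc_on)
  fix a b
  assume disc: "\<forall>\<zeta>::complex. norm \<zeta> \<le> 1 \<longrightarrow> a + \<zeta> *s b \<in> S"
  have "a + r *\<^sub>R (cos t *\<^sub>R b + sin t *\<^sub>R (\<i> *s b)) \<in> S" if "r \<in> {0..1}" for r t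
    using disc[rule_format, of "complex_of_real r * cis t"] that
    by (simp add: of_real_mult_smult cis_smult norm_mult)
  then interpret C2_near_disc S u u' u'' a b "\<i> *s b"
    using C2 by unfold_locales (auto simp: C2_with_def)
  have "0 \<le> u'' x b b + u'' x (\<i> *s b) (\<i> *s b)" if "x \<in> S" for x
    using levi_nonneg[OF that, of b] by (simp add: levi_def)
  from sub_mean_value[OF this]
  show "(\<lambda>t. u (a + cis t *s b)) integrable_on {0..2*pi}"
    and "u a \<le> integral {0..2*pi} (\<lambda>t. u (a + cis t *s b)) / (2*pi)"
    by (simp_all add: cis_smult)
qed

lemma C2_with_exp_mult_theta:
  assumes v: "C2_with D v v' v''" and d: "C2_with D d d' d''"
  obtains U' U'' where "C2_with D (\<lambda>z. exp (v z) * theta (d z)) U' U''"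
    and "\<And>x b. 4 * levi (U'' x) b = exp (v x) *
      (theta'' (d x) * ((d' x b)\<^sup>2 + (d' x (\<i> *s b))\<^sup>2)
       + theta' (d x) * (4 * levi (d'' x) b + 2 * (v' x b * d' x b + v' x (\<i> *s b) * d' x (\<i> *s b)))
       + theta (d x) * (4 * levi (v'' x) b + (v' x b)\<^sup>2 + (v' x (\<i> *s b))\<^sup>2))"
proof -
  have "C2_with D (\<lambda>z. exp (v z)) (\<lambda>x. exp (v x) *\<^sub>R v' x)
      (\<lambda>x. blinfun_outer (exp (v x) *\<^sub>R v' x) (v' x) + exp (v x) *\<^sub>R v'' x)"
    by (rule C2_with_compose_real[OF v DERIV_exp DERIV_exp isCont_exp])
  moreover have "C2_with D (\<lambda>z. theta (d z)) (\<lambda>x. theta' (d x) *\<^sub>R d' x)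
      (\<lambda>x. blinfun_outer (theta'' (d x) *\<^sub>R d' x) (d' x) + theta' (d x) *\<^sub>R d'' x)"
    by (rule C2_with_compose_real[OF d theta_has_real_derivative theta'_has_real_derivative isCont_theta''])
  ultimately show ?thesis
    by (rule that[OF C2_with_mult])
      (simp add: blinfun.scaleR_left power2_eq_square field_simps)
qed

lemma levi_uniformly_positive:
  fixes H :: "complex ^ 'n \<Rightarrow> (complex ^ 'n) \<Rightarrow>\<^sub>L (complex ^ 'n) \<Rightarrow>\<^sub>L real"
  assumes "compact K" and "continuous_on K H" and "\<And>x b. x \<in> K \<Longrightarrow> b \<noteq> 0 \<Longrightarrow> 0 < levi (H x) b"
  obtains \<mu> where "0 < \<mu>" and "\<And>x b. x \<in> K \<Longrightarrow> \<mu> * (norm b)\<^sup>2 \<le> levi (H x) b"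
proof -
  obtain \<mu> where "0 < \<mu>" and on_sphere: "\<And>x b. x \<in> K \<Longrightarrow> b \<in> sphere 0 1 \<Longrightarrow> \<mu> \<le> levi (H x) b"
  proof (cases "K = {}")
    case True
    then show ?thesis
      using that[of 1] by simp
  next
    case False
    then have nonempty: "K \<times> sphere (0 :: complex ^ 'n) 1 \<noteq> {}"
      by simp
    have "continuous_on (K \<times> sphere 0 1) (\<lambda>p. H (fst p))"
      by (rule continuous_on_compose2[OF assms(2) continuous_on_fst]) auto
    then have "continuous_on (K \<times> sphere 0 1) (\<lambda>(x, b). levi (H x) b)"
      unfolding levi_def split_beta by (intro continuous_intros) simp_all
    from continuous_attains_inf[OF compact_Times[OF assms(1) compact_sphere] nonempty this]
    obtain x0 b0 where "x0 \<in> K" "b0 \<in> sphere 0 1"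
      and "\<And>x b. x \<in> K \<Longrightarrow> b \<in> sphere 0 1 \<Longrightarrow> levi (H x0) b0 \<le> levi (H x) b"
      by auto
    moreover have "0 < levi (H x0) b0"
      using assms(3) \<open>x0 \<in> K\<close> \<open>b0 \<in> sphere 0 1\<close> by (metis mem_sphere_0 norm_zero zero_neq_one)
    ultimately show ?thesis
      using that by blast
  qed
  have "\<mu> * (norm b)\<^sup>2 \<le> levi (H x) b" if "x \<in> K" for x b
  proof (cases "b = 0")
    case True
    then show ?thesis
      by (simp add: levi_def)
  next
    case False
    have "\<mu> * (norm b)\<^sup>2 \<le> (norm b)\<^sup>2 * levi (H x) (b /\<^sub>R norm b)"
      using on_sphere[OF that, of "b /\<^sub>R norm b"] False by simp
    also have "\<dots> = levi (H x) b"
      using False by (simp add: levi_scaleR_right[symmetric])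
    finally show ?thesis .
  qed
  with \<open>0 < \<mu>\<close> show ?thesis
    by (rule that)
qed

lemma blinfun_i_smult_sum_squares_le:
  fixes A :: "(complex ^ 'n) \<Rightarrow>\<^sub>L real"
  shows "(A b)\<^sup>2 + (A (\<i> *s b))\<^sup>2 \<le> 2 * (norm A)\<^sup>2 * (norm b)\<^sup>2"
proof -
  have "norm (\<i> *s b) = norm b"
    by (simp add: norm_vec_def norm_mult)
  then have "\<bar>A b\<bar> \<le> norm A * norm b" "\<bar>A (\<i> *s b)\<bar> \<le> norm A * norm b"
    using norm_blinfun[of A] by (metis real_norm_def)+
  then have "(A b)\<^sup>2 \<le> (norm A * norm b)\<^sup>2" "(A (\<i> *s b))\<^sup>2 \<le> (norm A * norm b)\<^sup>2"
    by (metis abs_le_square_iff abs_of_nonneg mult_nonneg_nonneg norm_ge_zero)+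
  then show ?thesis
    by (simp add: power_mult_distrib)
qed

lemma gradient_dominated_by_levi:
  fixes A :: "complex ^ 'n \<Rightarrow> (complex ^ 'n) \<Rightarrow>\<^sub>L real"
  assumes "compact K" and "continuous_on K A" and "continuous_on K H"
    and "\<And>x b. x \<in> K \<Longrightarrow> b \<noteq> 0 \<Longrightarrow> 0 < levi (H x) b"
  obtains \<epsilon> where "0 < \<epsilon>"
    and "\<And>x b s. x \<in> K \<Longrightarrow> 0 < s \<Longrightarrow> s < \<epsilon> \<Longrightarrow>
           s\<^sup>2 * ((A x b)\<^sup>2 + (A x (\<i> *s b))\<^sup>2) \<le> 4 * levi (H x) b"
proof -
  obtain \<mu> where "0 < \<mu>" and levi_ge: "\<And>x b. x \<in> K \<Longrightarrow> \<mu> * (norm b)\<^sup>2 \<le> levi (H x) b"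
    using levi_uniformly_positive[OF assms(1,3,4)] by blast
  have "bounded (A ` K)"
    by (rule compact_imp_bounded[OF compact_continuous_image[OF assms(2,1)]])
  then obtain \<alpha> where "0 < \<alpha>" and A_le: "\<And>x. x \<in> K \<Longrightarrow> norm (A x) \<le> \<alpha>"
    by (auto simp: bounded_pos)
  have "s\<^sup>2 * ((A x b)\<^sup>2 + (A x (\<i> *s b))\<^sup>2) \<le> 4 * levi (H x) b"
    if "x \<in> K" "0 < s" "s < sqrt \<mu> / \<alpha>" for x b s
  proof -
    have "(s * \<alpha>)\<^sup>2 \<le> (sqrt \<mu>)\<^sup>2"
      using that \<open>0 < \<alpha>\<close> by (intro power_mono) (simp_all add: field_simps)
    then have s\<alpha>: "s\<^sup>2 * \<alpha>\<^sup>2 \<le> \<mu>"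
      using \<open>0 < \<mu>\<close> by (simp add: power_mult_distrib)
    have "(norm (A x))\<^sup>2 \<le> \<alpha>\<^sup>2"
      using A_le[OF that(1)] by (simp add: power_mono)
    then have "(A x b)\<^sup>2 + (A x (\<i> *s b))\<^sup>2 \<le> 2 * \<alpha>\<^sup>2 * (norm b)\<^sup>2"
      using blinfun_i_smult_sum_squares_le[of "A x" b] by (smt (verit) mult_right_mono zero_le_power2)
    then have "s\<^sup>2 * ((A x b)\<^sup>2 + (A x (\<i> *s b))\<^sup>2) \<le> s\<^sup>2 * (2 * \<alpha>\<^sup>2 * (norm b)\<^sup>2)"
      by (rule mult_left_mono) simp
    also have "\<dots> = 2 * (s\<^sup>2 * \<alpha>\<^sup>2) * (norm b)\<^sup>2"
      by (simp add: algebra_simps)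
    also have "\<dots> \<le> 2 * \<mu> * (norm b)\<^sup>2"
      using s\<alpha> by (simp add: mult_right_mono)
    also have "\<dots> \<le> 4 * levi (H x) b"
      using levi_ge[OF that(1), of b] mult_nonneg_nonneg[OF less_imp_le[OF \<open>0 < \<mu>\<close>] zero_le_power2[of "norm b"]]
      by simp
    finally show ?thesis .
  qed
  moreover have "0 < sqrt \<mu> / \<alpha>"
    using \<open>0 < \<mu>\<close> \<open>0 < \<alpha>\<close> by simp
  ultimately show ?thesis
    using that by blast
qed

lemma theta_quadratic_form_nonneg:
  fixes s L A1 A2 B1 B2 :: real
  assumes "s \<le> 1/4" and "0 < s \<Longrightarrow> s\<^sup>2 * (A1\<^sup>2 + A2\<^sup>2) \<le> 4 * L"
  shows "0 \<le> theta'' s * (B1\<^sup>2 + B2\<^sup>2) + theta' s * (4 * L + 2 * (A1 * B1 + A2 * B2))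
           + theta s * (A1\<^sup>2 + A2\<^sup>2)"
proof (cases "s \<le> 0")
  case True
  then show ?thesis
    by (simp add: theta_def theta'_def theta''_def)
next
  case False
  then have "0 < s"
    by simp
  define X where "X = (1 - 2 * s) * (B1\<^sup>2 + B2\<^sup>2) + s\<^sup>2 * (4 * L + 2 * (A1 * B1 + A2 * B2))
    + s ^ 4 * (A1\<^sup>2 + A2\<^sup>2)"
  have "theta'' s * (B1\<^sup>2 + B2\<^sup>2) + theta' s * (4 * L + 2 * (A1 * B1 + A2 * B2)) + theta s * (A1\<^sup>2 + A2\<^sup>2)
      = exp (- 1 / s) / s ^ 4 * X"
    using \<open>0 < s\<close> by (simp add: theta_def theta'_def theta''_def X_def field_simps eval_nat_numeral)
  moreover have "X = ((B1 + 2 * s\<^sup>2 * A1)\<^sup>2 + (B2 + 2 * s\<^sup>2 * A2)\<^sup>2) / 2 + (1/2 - 2 * s) * (B1\<^sup>2 + B2\<^sup>2)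
      + s\<^sup>2 * (4 * L - s\<^sup>2 * (A1\<^sup>2 + A2\<^sup>2))"
    by (simp add: X_def power2_eq_square eval_nat_numeral field_simps)
  then have "0 \<le> X"
    using assms \<open>0 < s\<close> by simp
  ultimately show ?thesis
    by simp
qed

lemma exp_mult_theta_psh:
  assumes v: "C2_with D v v' v''" and d: "C2_with D d d' d''" and "S \<subseteq> D"
    and v_levi: "\<And>x b. x \<in> S \<Longrightarrow> levi (v'' x) b = 0"
    and d_le: "\<And>x. x \<in> S \<Longrightarrow> d x \<le> 1/4"
    and gradient_le: "\<And>x b. x \<in> S \<Longrightarrow> 0 < d x \<Longrightarrow>
           (d x)\<^sup>2 * ((v' x b)\<^sup>2 + (v' x (\<i> *s b))\<^sup>2) \<le> 4 * levi (d'' x) b"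
  shows "psh S (\<lambda>z. exp (v z) * theta (d z))"
proof -
  obtain U' U'' where U: "C2_with D (\<lambda>z. exp (v z) * theta (d z)) U' U''"
    and U_levi: "\<And>x b. 4 * levi (U'' x) b = exp (v x) *
      (theta'' (d x) * ((d' x b)\<^sup>2 + (d' x (\<i> *s b))\<^sup>2)
       + theta' (d x) * (4 * levi (d'' x) b + 2 * (v' x b * d' x b + v' x (\<i> *s b) * d' x (\<i> *s b)))
       + theta (d x) * (4 * levi (v'' x) b + (v' x b)\<^sup>2 + (v' x (\<i> *s b))\<^sup>2))"
    using C2_with_exp_mult_theta[OF v d] by blast
  have "0 \<le> 4 * levi (U'' x) b" if "x \<in> S" for x b
    unfolding U_levi
    using theta_quadratic_form_nonneg[OF d_le gradient_le, OF that that] v_levi[OF that] by simp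
  then show ?thesis
    using C2_levi_nonneg_imp_psh[OF C2_with_subset[OF U \<open>S \<subseteq> D\<close>]] by simp
qed

theorem lemma3p2:
  fixes D E :: "(complex ^ 'n) set" and v d :: "complex ^ 'n \<Rightarrow> real"
  assumes "open D"
    and "pluriharmonic D v"
    and "strictly_psh_C2 D d"
    and "open E" and "compact (closure E)" and "closure E \<subseteq> D"
  shows "\<exists>\<epsilon>0>0. psh (E \<inter> {z. d z < \<epsilon>0}) (\<lambda>z. exp (v z) * theta (d z))"
proof -
  obtain v' v'' where v: "C2_with D v v' v''" and v_levi: "\<And>x b. x \<in> D \<Longrightarrow> levi (v'' x) b = 0"
    using assms(2) unfolding pluriharmonic_def by blast
  obtain d' d'' where d: "C2_with D d d' d''"
    and d_levi: "\<And>x b. x \<in> D \<Longrightarrow> b \<noteq> 0 \<Longrightarrow> 0 < levi (d'' x) b"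
    using assms(3) unfolding strictly_psh_C2_def by blast
  have "continuous_on (closure E) v'" "continuous_on (closure E) d''"
    using C2_with_continuous_on(2)[OF v] d assms(6) unfolding C2_with_def
    by (auto intro: continuous_on_subset)
  then obtain \<epsilon> where "0 < \<epsilon>" and small: "\<And>x b s. x \<in> closure E \<Longrightarrow> 0 < s \<Longrightarrow> s < \<epsilon> \<Longrightarrow>
      s\<^sup>2 * ((v' x b)\<^sup>2 + (v' x (\<i> *s b))\<^sup>2) \<le> 4 * levi (d'' x) b"
    using gradient_dominated_by_levi[OF assms(5)] d_levi assms(6) by blast
  have "E \<subseteq> D"
    using assms(6) closure_subset by blast
  have "psh (E \<inter> {z. d z < min (1/4) \<epsilon>}) (\<lambda>z. exp (v z) * theta (d z))"
    by (rule exp_mult_theta_psh[OF v d]) (use \<open>E \<subseteq> D\<close> closure_subset in \<open>auto intro!: v_levi small\<close>)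
  then show ?thesis
    using \<open>0 < \<epsilon>\<close> by (intro exI[of _ "min (1/4) \<epsilon>"]) auto
qed

end
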